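(* Let $S=(s_1,s_2,\dots,s_k)$ be finitely many positive real numbers such that $\max S\le \sum S/(1+\pi/2)$. Then there exists a cyclic polygon (a polygon inscribed in a circle) with these edge lengths that contains the center of its circle. *)

theory Defs
  imports "HOL-Analysis.Analysis"
begin

text \<open>The plane is modelled as the complex numbers.  A cyclic polygon with k vertices
  (k given in order) inscribed in the circle with centre c and radius r: vertex i is
  c + r * cis (theta i), where the angles strictly increase and wind less than once
  around the circle (so the vertices are distinct and in cyclic order, i.e. the polygon
  is a simple convex polygon inscribed in the circle).  Edge i joins vertex i to vertex
  (i+1) mod k.\<close>

definition cyclic_polygon_vertex :: "complex \<Rightarrow> real \<Rightarrow> (nat \<Rightarrow> real) \<Rightarrow> nat \<Rightarrow> complex" where
  "cyclic_polygon_vertex c r theta i = c + complex_of_real r * cis (theta i)"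

definition inscribed_polygon :: "nat \<Rightarrow> complex \<Rightarrow> real \<Rightarrow> (nat \<Rightarrow> real) \<Rightarrow> bool" where
  "inscribed_polygon k c r theta \<longleftrightarrow>
     r > 0 \<and> (\<forall>i. Suc i < k \<longrightarrow> theta i < theta (Suc i)) \<and> theta (k - 1) < theta 0 + 2 * pi"

end

theory Submission
  imports Defs
begin

text \<open>Lay the chords \<open>s\<^sub>i\<close> consecutively around a circle of radius \<open>r \<ge> max S / 2\<close>; the chord
  \<open>s\<^sub>i\<close> subtends the central angle \<open>2 arcsin (s\<^sub>i / 2r)\<close>, and the polygon closes up exactly when
  these angles sum to \<open>2\<pi>\<close>.  The angle sum depends continuously on \<open>r\<close>.  At \<open>r = max S / 2\<close> the
  longest chord is a diameter and contributes \<open>\<pi>\<close>, while \<open>arcsin x \<ge> x\<close> bounds the rest from below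
  by \<open>2 (\<Sum>S - max S) / max S \<ge> \<pi>\<close>; this is where the hypothesis enters.  At the circumradius of
  the regular \<open>k\<close>-gon with side \<open>max S\<close> every angle is at most \<open>2\<pi>/k\<close>.  The intermediate value
  theorem yields a closing radius.  Since every central angle is at most \<open>\<pi>\<close>, no open half-plane
  bounded by a line through the centre contains all vertices, so by the separating hyperplane
  theorem the centre lies in their convex hull.\<close>

lemma norm_cis_diff: "cmod (cis b - cis a) = 2 * \<bar>sin ((b - a) / 2)\<bar>"
proof -
  have "cmod (cis b - cis a)^2 = (cos b - cos a)^2 + (sin b - sin a)^2"
    by (simp add: cmod_power2)
  also have "\<dots> = 2 - 2 * cos (b - a)"
    by (simp add: power2_eq_square algebra_simps cos_diff)
  also have "cos (b - a) = 1 - 2 * sin ((b - a) / 2)^2"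
    by (metis cos_double_sin field_sum_of_halves mult_2)
  finally have "cmod (cis b - cis a)^2 = (2 * \<bar>sin ((b - a) / 2)\<bar>)^2"
    by (simp add: power_mult_distrib)
  then show ?thesis
    by (rule power2_eq_imp_eq) auto
qed

lemma inner_cis: "inner a (cis t) = cmod a * cos (t - Arg a)"
proof -
  have "Re a = cmod a * cos (Arg a)" "Im a = cmod a * sin (Arg a)"
    using rcis_cmod_Arg[of a] by (metis Re_rcis, metis Im_rcis)
  then show ?thesis
    by (simp add: inner_complex_def cos_diff algebra_simps)
qed

lemma discrete_intermediate_value:
  fixes f :: "nat \<Rightarrow> 'a::linorder"
  assumes "0 < k" "f 0 \<le> y" "y \<le> f k"
  shows "\<exists>i<k. f i \<le> y \<and> y \<le> f (Suc i)"
  using assms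
proof (induction k)
  case 0
  then show ?case by simp
next
  case (Suc k)
  show ?case
  proof (cases "y \<le> f k")
    case True
    with Suc have "k = 0 \<or> (\<exists>i<k. f i \<le> y \<and> y \<le> f (Suc i))"
      by blast
    with Suc.prems show ?thesis
      by (metis less_Suc_eq)
  next
    case False
    with Suc.prems show ?thesis
      by (metis lessI linorder_linear)
  qed
qed

lemma zero_in_convex_hull_cis:
  fixes theta :: "nat \<Rightarrow> real"
  assumes "0 < k" "theta 0 = 0" "theta k = 2 * pi"
    and steps: "\<And>i. i < k \<Longrightarrow> theta (Suc i) - theta i \<le> pi"
  shows "0 \<in> convex hull (cis ` theta ` {..<k})"
proof (rule ccontr)
  let ?V = "cis ` theta ` {..<k}"
  assume "0 \<notin> convex hull ?V"
  moreover have "closed (convex hull ?V)"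
    by (simp add: compact_imp_closed compact_convex_hull finite_imp_compact)
  ultimately obtain a b where "0 < b" and sep: "\<forall>x\<in>convex hull ?V. inner a x > b"
    using separating_hyperplane_closed_0 convex_convex_hull by blast
  have front: "cos (theta j - Arg a) > 0" if "j < k" for j
  proof -
    have "cis (theta j) \<in> convex hull ?V"
      using that by (intro hull_inc) auto
    with sep \<open>0 < b\<close> have "cmod a * cos (theta j - Arg a) > 0"
      by (metis inner_cis order.strict_trans)
    then show ?thesis
      using zero_less_mult_pos by fastforce
  qed
  have front_Suc: "cos (theta (Suc i) - Arg a) > 0" if "i < k" for i
  proof (cases "Suc i < k")
    case True
    then show ?thesis by (rule front)
  next
    case False
    with that have "Suc i = k"
      by simp
    then have "theta (Suc i) - Arg a = (theta 0 - Arg a) + 2 * pi"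
      using assms(2,3) by simp
    then show ?thesis
      using front[OF \<open>0 < k\<close>] by (metis cos_periodic)
  qed
  text \<open>\<open>\<gamma>\<close> is the direction of \<open>-a\<close>; the step of the walk that crosses it has an endpoint
    within \<open>\<pi>/2\<close> of \<open>\<gamma>\<close>, i.e. a vertex on the wrong side of the separating line.\<close>
  define \<gamma> where "\<gamma> = Arg a + pi"
  have opposite: "cos (t - Arg a) \<le> 0" if "\<bar>t - \<gamma>\<bar> \<le> pi / 2" for t
  proof -
    have "cos (t - Arg a) = - cos (t - \<gamma>)"
      using cos_periodic_pi[of "t - \<gamma>"] by (simp add: \<gamma>_def)
    moreover have "cos (t - \<gamma>) \<ge> 0"
      using that unfolding abs_le_iff by (intro cos_ge_zero) linarith+
    ultimately show ?thesis by simp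
  qed
  have "theta 0 \<le> \<gamma>" "\<gamma> \<le> theta k"
    using Arg_bounded[of a] assms(2,3) by (auto simp: \<gamma>_def)
  then obtain i where "i < k" "theta i \<le> \<gamma>" "\<gamma> \<le> theta (Suc i)"
    using discrete_intermediate_value[OF \<open>0 < k\<close>] by blast
  with steps have "\<bar>theta i - \<gamma>\<bar> \<le> pi / 2 \<or> \<bar>theta (Suc i) - \<gamma>\<bar> \<le> pi / 2"
    by fastforce
  then show False
    using opposite front[OF \<open>i < k\<close>] front_Suc[OF \<open>i < k\<close>] by fastforce
qed

lemma inscribed_polygon_of_central_angles:
  fixes alpha :: "nat \<Rightarrow> real"
  assumes "0 < k" "0 < r"
    and alpha: "\<And>i. i < k \<Longrightarrow> 0 < alpha i \<and> alpha i \<le> pi"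
    and total: "(\<Sum>i<k. alpha i) = 2 * pi"
  defines "theta \<equiv> \<lambda>i. \<Sum>j<i. alpha j"
  shows "inscribed_polygon k 0 r theta"
    and "\<And>i. i < k \<Longrightarrow> cmod (cyclic_polygon_vertex 0 r theta (Suc i mod k)
                              - cyclic_polygon_vertex 0 r theta i) = 2 * r * sin (alpha i / 2)"
    and "0 \<in> convex hull (cyclic_polygon_vertex 0 r theta ` {..<k})"
proof -
  have theta_Suc: "theta (Suc i) = theta i + alpha i" for i
    by (simp add: theta_def)
  have theta_0: "theta 0 = 0" and theta_k: "theta k = 2 * pi"
    using total by (simp_all add: theta_def)
  have vertex: "cyclic_polygon_vertex 0 r theta i = r *\<^sub>R cis (theta i)" for i
    by (simp add: cyclic_polygon_vertex_def scaleR_conv_of_real)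
  have vertex_next: "cyclic_polygon_vertex 0 r theta (Suc i mod k) = r *\<^sub>R cis (theta (Suc i))"
    if "i < k" for i
  proof (cases "Suc i < k")
    case True
    then show ?thesis by (simp add: vertex)
  next
    case False
    with that have "Suc i = k" by simp
    then show ?thesis using theta_0 theta_k by (simp add: vertex)
  qed
  show "inscribed_polygon k 0 r theta"
    unfolding inscribed_polygon_def
  proof (intro conjI allI impI)
    fix i
    assume "Suc i < k"
    then show "theta i < theta (Suc i)"
      using alpha[of i] theta_Suc by simp
  next
    have "theta k = theta (k - 1) + alpha (k - 1)"
      using theta_Suc[of "k - 1"] \<open>0 < k\<close> by simp
    then show "theta (k - 1) < theta 0 + 2 * pi"
      using alpha[of "k - 1"] \<open>0 < k\<close> theta_0 theta_k by simp
  qed (fact \<open>0 < r\<close>)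
  show "cmod (cyclic_polygon_vertex 0 r theta (Suc i mod k) - cyclic_polygon_vertex 0 r theta i)
          = 2 * r * sin (alpha i / 2)" if "i < k" for i
  proof -
    have "sin (alpha i / 2) \<ge> 0"
      using alpha[OF that] by (intro sin_ge_zero) auto
    then show ?thesis
      unfolding vertex_next[OF that] unfolding vertex
      using \<open>0 < r\<close> by (simp add: theta_Suc norm_cis_diff flip: scaleR_diff_right)
  qed
  have "cyclic_polygon_vertex 0 r theta ` {..<k} = (\<lambda>x. r *\<^sub>R x) ` cis ` theta ` {..<k}"
    by (simp add: vertex image_image)
  moreover have "0 \<in> convex hull (cis ` theta ` {..<k})"
    using zero_in_convex_hull_cis[OF \<open>0 < k\<close> theta_0 theta_k] alpha theta_Suc by simp
  ultimately show "0 \<in> convex hull (cyclic_polygon_vertex 0 r theta ` {..<k})"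
    by (metis convex_hull_scaling image_eqI scale_zero_right)
qed

definition central_angle :: "real \<Rightarrow> real \<Rightarrow> real" where
  "central_angle r l = 2 * arcsin (l / (2 * r))"

lemma central_angle_bounds:
  assumes "0 < r" "0 < l" "l \<le> 2 * r"
  shows "0 < central_angle r l" "central_angle r l \<le> pi"
proof -
  have "0 < l / (2 * r)" "l / (2 * r) \<le> 1"
    using assms by auto
  then show "0 < central_angle r l" "central_angle r l \<le> pi"
    using arcsin_less_arcsin[of 0 "l / (2 * r)"] arcsin_ubound[of "l / (2 * r)"]
    by (auto simp: central_angle_def)
qed

lemma sin_half_central_angle:
  assumes "0 < r" "0 \<le> l" "l \<le> 2 * r"
  shows "2 * r * sin (central_angle r l / 2) = l"
proof -
  have "0 \<le> l / (2 * r)" "l / (2 * r) \<le> 1"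
    using assms by auto
  then show ?thesis
    using \<open>0 < r\<close> by (simp add: central_angle_def)
qed

lemma central_angle_ge:
  assumes "0 < r" "0 \<le> l" "l \<le> 2 * r"
  shows "l / r \<le> central_angle r l"
proof -
  have "0 \<le> l / (2 * r)" "l / (2 * r) \<le> 1"
    using assms by auto
  then have "l / (2 * r) \<le> arcsin (l / (2 * r))"
    using sin_x_le_x[of "arcsin (l / (2 * r))"] arcsin_nonneg[of "l / (2 * r)"] by simp
  then show ?thesis
    by (simp add: central_angle_def)
qed

lemma central_angle_mono:
  assumes "0 < r" "0 \<le> l" "l \<le> l'" "l' \<le> 2 * r"
  shows "central_angle r l \<le> central_angle r l'"
proof -
  have "0 \<le> l / (2 * r)" "l / (2 * r) \<le> l' / (2 * r)" "l' / (2 * r) \<le> 1"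
    using assms by (auto intro: divide_right_mono)
  then show ?thesis
    unfolding central_angle_def by (simp add: arcsin_le_arcsin)
qed

lemma continuous_on_central_angle:
  assumes "0 < a" "0 \<le> l" "l \<le> 2 * a"
  shows "continuous_on {a..} (\<lambda>r. central_angle r l)"
  unfolding central_angle_def
proof (intro continuous_intros ballI conjI)
  fix r :: real
  assume "r \<in> {a..}"
  then have "0 < r" "l \<le> 2 * r"
    using assms by auto
  moreover have "0 \<le> l / (2 * r)"
    using \<open>0 \<le> l\<close> \<open>0 < r\<close> by simp
  ultimately show "2 * r \<noteq> 0" "-1 \<le> l / (2 * r)" "l / (2 * r) \<le> 1"
    by auto
qed

lemma central_angle_sum_at_half_max_ge:
  fixes s :: "nat \<Rightarrow> real"
  assumes s: "\<And>i. i < k \<Longrightarrow> 0 < s i \<and> s i \<le> M"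
    and "m < k" "s m = M"
    and large: "M * (1 + pi / 2) \<le> (\<Sum>i<k. s i)"
  shows "2 * pi \<le> (\<Sum>i<k. central_angle (M / 2) (s i))"
proof -
  have "0 < M"
    using s \<open>m < k\<close> \<open>s m = M\<close> by fastforce
  have "pi / 2 \<le> (\<Sum>i\<in>{..<k} - {m}. s i) / M"
  proof -
    have "(\<Sum>i<k. s i) = M + (\<Sum>i\<in>{..<k} - {m}. s i)"
      using \<open>m < k\<close> \<open>s m = M\<close> by (simp add: sum.remove)
    with large \<open>0 < M\<close> show ?thesis
      by (simp add: pos_le_divide_eq algebra_simps)
  qed
  also have "\<dots> = (\<Sum>i\<in>{..<k} - {m}. s i / (M / 2)) / 2"
    by (simp add: sum_divide_distrib)
  also have "\<dots> \<le> (\<Sum>i\<in>{..<k} - {m}. central_angle (M / 2) (s i)) / 2"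
    using \<open>0 < M\<close> by (intro divide_right_mono sum_mono central_angle_ge) (auto dest: s)
  finally have "pi \<le> (\<Sum>i\<in>{..<k} - {m}. central_angle (M / 2) (s i))"
    by simp
  moreover have "central_angle (M / 2) (s m) = pi"
    using \<open>0 < M\<close> \<open>s m = M\<close> by (simp add: central_angle_def)
  moreover have "(\<Sum>i<k. central_angle (M / 2) (s i))
      = central_angle (M / 2) (s m) + (\<Sum>i\<in>{..<k} - {m}. central_angle (M / 2) (s i))"
    using \<open>m < k\<close> by (simp add: sum.remove)
  ultimately show ?thesis
    by simp
qed

text \<open>\<open>M / (2 * sin (pi / k))\<close> is the circumradius of the regular \<open>k\<close>-gon with side \<open>M\<close>.\<close>

lemma central_angle_sum_at_regular_radius_le:
  fixes s :: "nat \<Rightarrow> real"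
  assumes "2 \<le> k" and s: "\<And>i. i < k \<Longrightarrow> 0 < s i \<and> s i \<le> M"
  shows "(\<Sum>i<k. central_angle (M / (2 * sin (pi / k))) (s i)) \<le> 2 * pi"
proof -
  define R where "R = M / (2 * sin (pi / k))"
  have "0 < M"
    using s[of 0] \<open>2 \<le> k\<close> by auto
  have "0 < pi / k"
    using \<open>2 \<le> k\<close> by simp
  moreover have "pi / k \<le> pi / 2"
    using \<open>2 \<le> k\<close> by (intro divide_left_mono) auto
  ultimately have "arcsin (sin (pi / k)) = pi / k"
    by (intro arcsin_sin) linarith+
  have "0 < sin (pi / k)"
    using \<open>2 \<le> k\<close> by (rule sin_pi_divide_n_gt_0)
  then have "0 < R" "M \<le> 2 * R"
    using \<open>0 < M\<close> by (auto simp: R_def field_simps)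
  have "central_angle R (s i) \<le> 2 * pi / k" if "i < k" for i
  proof -
    have "central_angle R (s i) \<le> central_angle R M"
      using s[OF that] \<open>0 < R\<close> \<open>M \<le> 2 * R\<close> by (intro central_angle_mono) auto
    also have "\<dots> = 2 * arcsin (sin (pi / k))"
      using \<open>0 < sin (pi / k)\<close> \<open>0 < M\<close> by (simp add: central_angle_def R_def)
    also have "\<dots> = 2 * pi / k"
      using \<open>arcsin (sin (pi / k)) = pi / k\<close> by simp
    finally show ?thesis .
  qed
  then have "(\<Sum>i<k. central_angle R (s i)) \<le> k * (2 * pi / k)"
    using sum_bounded_above[of "{..<k}"] by (metis card_lessThan lessThan_iff)
  then show ?thesis
    using \<open>2 \<le> k\<close> by (simp add: R_def)
qed

lemma exists_radius_central_angle_sum: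
  fixes s :: "nat \<Rightarrow> real"
  assumes s: "\<And>i. i < k \<Longrightarrow> 0 < s i \<and> s i \<le> M"
    and "m < k" "s m = M"
    and large: "M * (1 + pi / 2) \<le> (\<Sum>i<k. s i)"
  shows "\<exists>r \<ge> M / 2. (\<Sum>i<k. central_angle r (s i)) = 2 * pi"
proof -
  have "0 < M"
    using s \<open>m < k\<close> \<open>s m = M\<close> by fastforce
  have "2 \<le> k"
  proof (rule ccontr)
    assume "\<not> 2 \<le> k"
    with \<open>m < k\<close> have "k = 1" "m = 0"
      by auto
    with \<open>s m = M\<close> have "(\<Sum>i<k. s i) = M"
      by simp
    with large show False
      using mult_pos_pos[OF \<open>0 < M\<close> pi_gt_zero] by (simp add: algebra_simps)
  qed
  define R where "R = M / (2 * sin (pi / k))"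
  have "0 < sin (pi / k)" "sin (pi / k) \<le> 1"
    using \<open>2 \<le> k\<close> by (simp_all add: sin_pi_divide_n_gt_0)
  then have "M / 2 \<le> R"
    unfolding R_def using \<open>0 < M\<close> by (intro frac_le) auto
  have "continuous_on {M / 2..R} (\<lambda>r. central_angle r (s i))" if "i < k" for i
    using continuous_on_central_angle[of "M / 2" "s i"] s[OF that] \<open>0 < M\<close>
    by (auto elim: continuous_on_subset)
  then have "continuous_on {M / 2..R} (\<lambda>r. \<Sum>i<k. central_angle r (s i))"
    by (intro continuous_on_sum) auto
  then show ?thesis
    using IVT2'[OF central_angle_sum_at_regular_radius_le[OF \<open>2 \<le> k\<close> s, folded R_def]
        central_angle_sum_at_half_max_ge[OF s \<open>m < k\<close> \<open>s m = M\<close> large] \<open>M / 2 \<le> R\<close>]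
    by blast
qed

theorem lemma11:
  fixes s :: "nat \<Rightarrow> real" and k :: nat
  assumes "k \<ge> 1"
    and "\<forall>i<k. s i > 0"
    and "Max (s ` {..<k}) \<le> (\<Sum>i<k. s i) / (1 + pi / 2)"
  shows "\<exists>c r theta. inscribed_polygon k c r theta
           \<and> (\<forall>i<k. cmod (cyclic_polygon_vertex c r theta (Suc i mod k)
                           - cyclic_polygon_vertex c r theta i) = s i)
           \<and> c \<in> convex hull (cyclic_polygon_vertex c r theta ` {..<k})"
proof -
  define M where "M = Max (s ` {..<k})"
  have "M \<in> s ` {..<k}"
    unfolding M_def using \<open>k \<ge> 1\<close> by (intro Max_in) (auto simp: lessThan_empty_iff)
  then obtain m where "m < k" "s m = M"
    by auto
  have s: "0 < s i \<and> s i \<le> M" if "i < k" for i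
    using assms(2) that by (auto simp: M_def)
  have "M * (1 + pi / 2) \<le> (\<Sum>i<k. s i)"
    using assms(3) pi_gt_zero by (simp add: M_def pos_le_divide_eq)
  then obtain r where "M / 2 \<le> r" and total: "(\<Sum>i<k. central_angle r (s i)) = 2 * pi"
    using exists_radius_central_angle_sum[where s = s, OF s \<open>m < k\<close> \<open>s m = M\<close>] by blast
  have "0 < r" "\<And>i. i < k \<Longrightarrow> s i \<le> 2 * r"
    using s[OF \<open>m < k\<close>] s \<open>M / 2 \<le> r\<close> by fastforce+
  then have angles: "0 < central_angle r (s i) \<and> central_angle r (s i) \<le> pi"
    and chords: "2 * r * sin (central_angle r (s i) / 2) = s i" if "i < k" for i
    using s[OF that] that central_angle_bounds sin_half_central_angle by auto
  have "0 < k"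
    using \<open>k \<ge> 1\<close> by simp
  note polygon = inscribed_polygon_of_central_angles[OF this \<open>0 < r\<close> angles total]
  show ?thesis
    using polygon chords by (intro exI conjI allI impI) auto
qed

end
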